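(* Let $\ell(\boldsymbol{\theta},z)$ be a loss which is $L$-Lipschitz in $\boldsymbol{\theta}\in\mathbb{R}^m$ (Euclidean norm) for every example $z$, and let $\mathbf{g}(\boldsymbol{\theta},z)\in\mathbb{R}^m$ be smooth with $\|\mathbf{g}(\boldsymbol{\theta},z)\|\le\xi$ for all $\boldsymbol{\theta},z$. For a training set $S=(z_1,\dots,z_n)$ and mini-batch size $1\le b\le n$, consider the stochastic discrete-time optimizer $$\boldsymbol{\theta}^S_{t+1}=\frac1b\sum_{i=1}^b\mathbf{g}(\boldsymbol{\theta}^S_t,z_{i}),$$ where at each step $b$ indices are sampled at random from $\{1,\dots,n\}$ and the corresponding examples of $S$ form the mini-batch, the initial condition being chosen (possibly randomly) within a Euclidean ball of radius $C/2$ around a fixed reference point. Let $\mathcal{A}(S)=\boldsymbol{\theta}^S_t$. Suppose this optimizer is contracting in expectation: there are $0<\mu<1$ and metrics $\mathbf{M}_0,\dots,\mathbf{M}_t$ with $M_{min}\mathbf{I}\preceq\mathbf{M}_k\preceq M_{max}\mathbf{I}$ such that, for any two trajectories $\mathbf{x}_k,\mathbf{y}_k$ driven by the same realization $\Gamma$ of the mini-batch sampling, $\mathbb{E}_{\mathcal{A}}[d_{\mathcal{M}_{k+1}}(\mathbf{x}_{k+1},\mathbf{y}_{k+1})]\le\mu\,\mathbb{E}_{\mathcal{A}}[d_{\mathcal{M}_k}(\mathbf{x}_k,\mathbf{y}_k)]$. Let $\chi=\sqrt{M_{max}/M_{min}}$. Then $\mathcal{A}$ is uniformly $\epsilon$-stable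 with $$\epsilon\le L\chi C\mu^t+\frac{2\chi L\xi}{(1-\mu)n}.$$
   Context: Training set $S=(z_1,\dots,z_n)$ of i.i.d. examples. $d_{\mathcal{M}_k}$ denotes the geodesic distance on $\mathbb{R}^m$ with respect to the Riemannian metric $\mathbf{M}_k$. An algorithm $\mathcal{A}$ is $\epsilon$-uniformly stable if for all training sets $S,S'$ differing in at most one example, $\sup_z\mathbb{E}_{\mathcal{A}}[\ell(\mathcal{A}(S);z)-\ell(\mathcal{A}(S');z)]\le\epsilon$, the expectation being over the randomness of $\mathcal{A}$ (initialization and mini-batch sampling); when comparing $S$ and $S'$, the same sampled indices are used at each step to draw mini-batches from $S$ and from $S'$. *)

theory Defs
  imports "HOL-Analysis.Analysis" "HOL-Probability.Probability"
begin

text \<open>Smooth (C-infinity) maps on R^m: all iterated Frechet derivatives exist everywhere.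
  F is a family of maps closed under taking directional derivatives of the Frechet derivative.\<close>
definition smooth_map :: "(real^'m \<Rightarrow> 'b::real_normed_vector) \<Rightarrow> bool" where
  "smooth_map f \<longleftrightarrow> (\<exists>F. f \<in> F \<and>
     (\<forall>h\<in>F. \<exists>Dh. (\<forall>x. (h has_derivative Dh x) (at x)) \<and> (\<forall>v. (\<lambda>x. Dh x v) \<in> F)))"

definition metric_field :: "(real^'m \<Rightarrow> real^'m^'m) \<Rightarrow> real \<Rightarrow> real \<Rightarrow> bool" where
  "metric_field M Mmin Mmax \<longleftrightarrow> continuous_on UNIV M \<and>
     (\<forall>x. transpose (M x) = M x) \<and>
     (\<forall>x v. Mmin * (v \<bullet> v) \<le> v \<bullet> (M x *v v) \<and> v \<bullet> (M x *v v) \<le> Mmax * (v \<bullet> v))"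

definition geodist :: "(real^'m \<Rightarrow> real^'m^'m) \<Rightarrow> real^'m \<Rightarrow> real^'m \<Rightarrow> real" where
  "geodist M x y = Inf {l. \<exists>\<gamma>. \<gamma> piecewise_C1_differentiable_on {0..1} \<and> \<gamma> 0 = x \<and> \<gamma> 1 = y \<and>
      ((\<lambda>s. sqrt (vector_derivative \<gamma> (at s) \<bullet> (M (\<gamma> s) *v vector_derivative \<gamma> (at s))))
         has_integral l) {0..1}}"

definition opt_step :: "(real^'m \<Rightarrow> 'z \<Rightarrow> real^'m) \<Rightarrow> nat \<Rightarrow> 'z list \<Rightarrow> (nat \<Rightarrow> nat) \<Rightarrow> real^'m \<Rightarrow> real^'m" where
  "opt_step g b S \<gamma> \<theta> = (1 / real b) *\<^sub>R (\<Sum>i<b. g \<theta> (S ! \<gamma> i))"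

primrec traj :: "(real^'m \<Rightarrow> 'z \<Rightarrow> real^'m) \<Rightarrow> nat \<Rightarrow> 'z list \<Rightarrow> real^'m \<Rightarrow> (nat \<Rightarrow> nat \<Rightarrow> nat) \<Rightarrow> nat \<Rightarrow> real^'m" where
  "traj g b S \<theta>0 \<Gamma> 0 = \<theta>0"
| "traj g b S \<theta>0 \<Gamma> (Suc k) = opt_step g b S (\<Gamma> k) (traj g b S \<theta>0 \<Gamma> k)"

definition batch_seqs :: "nat \<Rightarrow> nat \<Rightarrow> nat \<Rightarrow> (nat \<Rightarrow> nat \<Rightarrow> nat) set" where
  "batch_seqs t b n = (\<Pi>\<^sub>E k\<in>{..<t}. \<Pi>\<^sub>E i\<in>{..<b}. {..<n})"

text \<open>Randomness of the algorithm: initialization seed w ~ W, and mini-batch indices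
  drawn i.i.d. uniformly from {0..<n} (uniform distribution on batch_seqs).\<close>
definition alg_space :: "'w measure \<Rightarrow> nat \<Rightarrow> nat \<Rightarrow> nat \<Rightarrow> ('w \<times> (nat \<Rightarrow> nat \<Rightarrow> nat)) measure" where
  "alg_space W t b n = W \<Otimes>\<^sub>M measure_pmf (pmf_of_set (batch_seqs t b n))"

definition alg :: "(real^'m \<Rightarrow> 'z \<Rightarrow> real^'m) \<Rightarrow> nat \<Rightarrow> nat \<Rightarrow> ('z list \<Rightarrow> 'w \<Rightarrow> real^'m)
                   \<Rightarrow> 'z list \<Rightarrow> 'w \<times> (nat \<Rightarrow> nat \<Rightarrow> nat) \<Rightarrow> real^'m" where
  "alg g b t init S \<omega> = traj g b S (init S (fst \<omega>)) (snd \<omega>) t"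

definition neighbours :: "nat \<Rightarrow> 'z list \<Rightarrow> 'z list \<Rightarrow> bool" where
  "neighbours n S S' \<longleftrightarrow> length S = n \<and> length S' = n \<and> card {i. i < n \<and> S ! i \<noteq> S' ! i} \<le> 1"

definition uniformly_stable ::
  "('o measure) \<Rightarrow> nat \<Rightarrow> ('z list \<Rightarrow> 'o \<Rightarrow> 'p) \<Rightarrow> ('p \<Rightarrow> 'z \<Rightarrow> real) \<Rightarrow> real \<Rightarrow> bool" where
  "uniformly_stable P n A loss eps \<longleftrightarrow>
     (\<forall>S S'. neighbours n S S' \<longrightarrow>
        (\<forall>z. (\<integral>\<omega>. loss (A S \<omega>) z - loss (A S' \<omega>) z \<partial>P) \<le> eps))"

definition adapted_before :: "nat \<Rightarrow> ('w \<times> (nat \<Rightarrow> nat \<Rightarrow> nat) \<Rightarrow> 'a) \<Rightarrow> bool" where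
  "adapted_before k X \<longleftrightarrow> (\<forall>w \<Gamma> \<Gamma>'. (\<forall>j<k. \<Gamma> j = \<Gamma>' j) \<longrightarrow> X (w, \<Gamma>) = X (w, \<Gamma>'))"

definition contracting_in_expectation ::
  "('w \<times> (nat \<Rightarrow> nat \<Rightarrow> nat)) measure \<Rightarrow> (real^'m \<Rightarrow> 'z \<Rightarrow> real^'m) \<Rightarrow> nat \<Rightarrow> nat \<Rightarrow> 'z list
     \<Rightarrow> (nat \<Rightarrow> real^'m \<Rightarrow> real^'m^'m) \<Rightarrow> real \<Rightarrow> bool" where
  "contracting_in_expectation P g b t S M \<mu> \<longleftrightarrow>
     (\<forall>k<t. \<forall>X Y. X \<in> borel_measurable P \<and> Y \<in> borel_measurable P \<and>
        adapted_before k X \<and> adapted_before k Y \<longrightarrow>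
        (\<integral>\<^sup>+\<omega>. ennreal (geodist (M (Suc k)) (opt_step g b S (snd \<omega> k) (X \<omega>))
                                              (opt_step g b S (snd \<omega> k) (Y \<omega>))) \<partial>P)
        \<le> ennreal \<mu> * (\<integral>\<^sup>+\<omega>. ennreal (geodist (M k) (X \<omega>) (Y \<omega>)) \<partial>P))"

end

(* Interpolate between the runs on S and S' by hybrid runs that switch from S' to S after j steps.
   Consecutive hybrids differ in a single step: in the initialization, which costs at most C, or in
   one optimizer step, where only the one differing example matters; a uniformly drawn batch hits it
   b/n times on average, so the step differs by at most 2 xi / n in expectation. Afterwards both
   hybrids follow the optimizer on S, which contracts their expected geodesic distance by mu per
   step, and the metric bounds convert geodesic into Euclidean distance at the price of
   sqrt (Mmax / Mmin). Telescoping, summing the geometric series and the Lipschitz bound on the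
   loss give the stability constant. *)

theory Submission
  imports Defs
begin

lemma smooth_map_continuous: "smooth_map f \<Longrightarrow> continuous_on UNIV f"
  unfolding smooth_map_def
  by (metis has_derivative_continuous continuous_at_imp_continuous_on)

lemma metric_field_le:
  fixes M :: "real^'m \<Rightarrow> real^'m^'m"
  assumes "metric_field M Mmin Mmax"
  shows "Mmin \<le> Mmax"
proof -
  let ?v = "axis undefined 1 :: real^'m"
  have "Mmin * (?v \<bullet> ?v) \<le> Mmax * (?v \<bullet> ?v)"
    using assms unfolding metric_field_def by (meson order_trans)
  then show ?thesis by (simp add: inner_axis_axis)
qed

lemma continuous_on_matrix_vector_mult_left:
  fixes A :: "'a::topological_space \<Rightarrow> real^'n^'m"
  assumes "continuous_on S A"
  shows "continuous_on S (\<lambda>x. A x *v v)"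
  unfolding matrix_vector_mult_def
  by (intro continuous_on_vec_lambda continuous_intros continuous_on_component assms)

lemma metric_path_length_ge:
  assumes mf: "metric_field M Mmin Mmax" and Mmin: "0 < Mmin"
    and pc: "\<gamma> piecewise_C1_differentiable_on {0..1}" and "\<gamma> 0 = x" and "\<gamma> 1 = y"
    and len: "((\<lambda>s. sqrt (vector_derivative \<gamma> (at s) \<bullet> (M (\<gamma> s) *v vector_derivative \<gamma> (at s))))
               has_integral l) {0..1}"
  shows "sqrt Mmin * norm (y - x) \<le> l"
proof -
  from pc obtain K where K: "finite K" "\<gamma> C1_differentiable_on ({0..1} - K)"
    and cont: "continuous_on {0..1} \<gamma>"
    unfolding piecewise_C1_differentiable_on_def by blast
  have ftc: "((\<lambda>s. vector_derivative \<gamma> (at s)) has_integral (y - x)) {0..1}"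
  proof -
    have "((\<lambda>s. vector_derivative \<gamma> (at s)) has_integral (\<gamma> 1 - \<gamma> 0)) {0..1}"
    proof (rule fundamental_theorem_of_calculus_interior_strong[OF K(1)])
      fix s assume "s \<in> {0<..<1} - K"
      with K(2) obtain D where "(\<gamma> has_vector_derivative D) (at s)"
        unfolding C1_differentiable_on_def by force
      then show "(\<gamma> has_vector_derivative vector_derivative \<gamma> (at s)) (at s)"
        by (metis vector_derivative_at)
    qed (use cont in auto)
    then show ?thesis using assms by simp
  qed
  have speed: "sqrt Mmin * norm (vector_derivative \<gamma> (at s))
      \<le> sqrt (vector_derivative \<gamma> (at s) \<bullet> (M (\<gamma> s) *v vector_derivative \<gamma> (at s)))" for s
  proof -
    let ?v = "vector_derivative \<gamma> (at s)"
    have "Mmin * (?v \<bullet> ?v) \<le> ?v \<bullet> (M (\<gamma> s) *v ?v)"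
      using mf unfolding metric_field_def by blast
    then show ?thesis by (metis real_sqrt_le_mono real_sqrt_mult norm_eq_sqrt_inner)
  qed
  have "sqrt Mmin * norm (y - x) = norm (integral {0..1} (\<lambda>s. sqrt Mmin *\<^sub>R vector_derivative \<gamma> (at s)))"
    using Mmin by (simp add: integral_unique[OF ftc])
  also have "\<dots> \<le> integral {0..1}
      (\<lambda>s. sqrt (vector_derivative \<gamma> (at s) \<bullet> (M (\<gamma> s) *v vector_derivative \<gamma> (at s))))"
    using has_integral_integrable[OF has_integral_cmul[OF ftc]] has_integral_integrable[OF len] speed Mmin
    by (intro integral_norm_bound_integral) auto
  also have "\<dots> = l" using len by (rule integral_unique)
  finally show ?thesis .
qed

lemma metric_segment_length_le:
  fixes x y :: "real^'m"
  assumes mf: "metric_field M Mmin Mmax"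
  shows "\<exists>l \<gamma>. \<gamma> piecewise_C1_differentiable_on {0..1} \<and> \<gamma> 0 = x \<and> \<gamma> 1 = y \<and>
      ((\<lambda>s. sqrt (vector_derivative \<gamma> (at s) \<bullet> (M (\<gamma> s) *v vector_derivative \<gamma> (at s))))
         has_integral l) {0..1} \<and> l \<le> sqrt Mmax * norm (y - x)"
proof -
  define \<gamma> where "\<gamma> = (\<lambda>s::real. x + s *\<^sub>R (y - x))"
  have der: "(\<gamma> has_vector_derivative (y - x)) (at s)" for s
    unfolding \<gamma>_def by (auto intro!: derivative_eq_intros)
  then have vd: "vector_derivative \<gamma> (at s) = y - x" for s
    by (rule vector_derivative_at)
  have cont: "continuous_on A \<gamma>" for A
    unfolding \<gamma>_def by (intro continuous_intros)
  have pc: "\<gamma> piecewise_C1_differentiable_on {0..1}"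
    unfolding piecewise_C1_differentiable_on_def C1_differentiable_on_def
    using der cont by (intro conjI exI[of _ "{}"]) (auto intro!: exI[of _ "\<lambda>_. y - x"])
  define h where "h s = sqrt ((y - x) \<bullet> (M (\<gamma> s) *v (y - x)))" for s
  have "continuous_on UNIV M" using mf unfolding metric_field_def by blast
  then have "continuous_on {0..1} (\<lambda>s. M (\<gamma> s))"
    using cont by (rule continuous_on_compose2) auto
  then have "continuous_on {0..1} h"
    unfolding h_def by (intro continuous_intros continuous_on_matrix_vector_mult_left)
  then have len: "(h has_integral integral {0..1} h) {0..1}"
    using integrable_continuous_real by blast
  have "h s \<le> sqrt Mmax * norm (y - x)" for s
  proof -
    have "(y - x) \<bullet> (M (\<gamma> s) *v (y - x)) \<le> Mmax * ((y - x) \<bullet> (y - x))"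
      using mf unfolding metric_field_def by blast
    then show ?thesis unfolding h_def by (metis real_sqrt_le_mono real_sqrt_mult norm_eq_sqrt_inner)
  qed
  then have "integral {0..1} h \<le> sqrt Mmax * norm (y - x)"
    using integral_le[of h "{0..1}" "\<lambda>_. sqrt Mmax * norm (y - x)"] len by auto
  moreover have "(\<lambda>s. sqrt (vector_derivative \<gamma> (at s) \<bullet> (M (\<gamma> s) *v vector_derivative \<gamma> (at s)))) = h"
    by (simp add: vd h_def fun_eq_iff)
  moreover have "\<gamma> 0 = x" "\<gamma> 1 = y" by (simp_all add: \<gamma>_def)
  ultimately show ?thesis
    using pc len by (intro exI[of _ "integral {0..1} h"] exI[of _ \<gamma>]) simp
qed

lemma geodist_bounds:
  fixes x y :: "real^'m"
  assumes mf: "metric_field M Mmin Mmax" and Mmin: "0 < Mmin"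
  shows "sqrt Mmin * norm (y - x) \<le> geodist M x y" "geodist M x y \<le> sqrt Mmax * norm (y - x)"
proof -
  let ?L = "{l. \<exists>\<gamma>. \<gamma> piecewise_C1_differentiable_on {0..1} \<and> \<gamma> 0 = x \<and> \<gamma> 1 = y \<and>
      ((\<lambda>s. sqrt (vector_derivative \<gamma> (at s) \<bullet> (M (\<gamma> s) *v vector_derivative \<gamma> (at s))))
         has_integral l) {0..1}}"
  obtain l0 where l0: "l0 \<in> ?L" "l0 \<le> sqrt Mmax * norm (y - x)"
    using metric_segment_length_le[OF mf, of x y] by blast
  have lower: "\<And>l. l \<in> ?L \<Longrightarrow> sqrt Mmin * norm (y - x) \<le> l"
    using metric_path_length_ge[OF mf Mmin] by blast
  show "sqrt Mmin * norm (y - x) \<le> geodist M x y"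
    unfolding geodist_def using l0(1) lower by (intro cInf_greatest) auto
  have "bdd_below ?L" by (rule bdd_belowI[OF lower])
  then have "geodist M x y \<le> l0"
    unfolding geodist_def using l0(1) by (rule cInf_lower[rotated])
  with l0(2) show "geodist M x y \<le> sqrt Mmax * norm (y - x)" by linarith
qed

primrec traj_data :: "(real^'m \<Rightarrow> 'z \<Rightarrow> real^'m) \<Rightarrow> nat \<Rightarrow> (nat \<Rightarrow> 'z list) \<Rightarrow> real^'m
                        \<Rightarrow> (nat \<Rightarrow> nat \<Rightarrow> nat) \<Rightarrow> nat \<Rightarrow> real^'m" where
  "traj_data g b D \<theta>0 \<Gamma> 0 = \<theta>0"
| "traj_data g b D \<theta>0 \<Gamma> (Suc k) = opt_step g b (D k) (\<Gamma> k) (traj_data g b D \<theta>0 \<Gamma> k)"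

lemma traj_data_eq_traj: "(\<And>j. j < k \<Longrightarrow> D j = S) \<Longrightarrow> traj_data g b D \<theta> \<Gamma> k = traj g b S \<theta> \<Gamma> k"
  by (induction k) auto

lemma opt_step_cong: "(\<And>i. i < b \<Longrightarrow> \<gamma> i = \<gamma>' i) \<Longrightarrow> opt_step g b S \<gamma> \<theta> = opt_step g b S \<gamma>' \<theta>"
  unfolding opt_step_def by (metis (no_types, lifting) lessThan_iff sum.cong)

lemma traj_data_cong:
  "(\<And>j i. j < k \<Longrightarrow> i < b \<Longrightarrow> \<Gamma> j i = \<Gamma>' j i) \<Longrightarrow> traj_data g b D \<theta> \<Gamma> k = traj_data g b D \<theta> \<Gamma>' k"
  by (induction k) (auto intro: opt_step_cong)

lemma adapted_before_traj_data: "adapted_before k (\<lambda>\<omega>. traj_data g b D (f (fst \<omega>)) (snd \<omega>) k)"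
  unfolding adapted_before_def by (auto intro!: traj_data_cong)

lemma continuous_on_traj_data:
  assumes "\<And>z. continuous_on UNIV (\<lambda>\<theta>. g \<theta> z)"
  shows "continuous_on UNIV (\<lambda>\<theta>. traj_data g b D \<theta> \<Gamma> k)"
proof (induction k)
  case (Suc k)
  show ?case unfolding traj_data.simps opt_step_def
    using continuous_on_compose2[OF assms Suc] by (intro continuous_intros) auto
qed (simp add: continuous_on_id)

text \<open>The state at time k depends only on the first k batches, a finite amount of discrete
  data; measurability follows by splitting over its countably many values.\<close>
lemma measurable_traj_data:
  assumes g: "\<And>z. continuous_on UNIV (\<lambda>\<theta>. g \<theta> z)" and f: "f \<in> borel_measurable W"
  shows "(\<lambda>\<omega>. traj_data g b D (f (fst \<omega>)) (snd \<omega>) k) \<in> borel_measurable (W \<Otimes>\<^sub>M measure_pmf p)"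
proof -
  define batches :: "(nat \<Rightarrow> nat \<Rightarrow> nat) \<Rightarrow> nat list list"
    where "batches \<Gamma> = map (\<lambda>j. map (\<Gamma> j) [0..<b]) [0..<k]" for \<Gamma>
  have eq: "traj_data g b D (f (fst \<omega>)) (snd \<omega>) k
      = traj_data g b D (f (fst \<omega>)) (\<lambda>j i. batches (snd \<omega>) ! j ! i) k" for \<omega>
    by (rule traj_data_cong) (simp add: batches_def)
  have "(\<lambda>\<omega>. traj_data g b D (f (fst \<omega>)) (\<lambda>j i. xs ! j ! i) k) \<in> borel_measurable (W \<Otimes>\<^sub>M measure_pmf p)"
    for xs
    using borel_measurable_continuous_onI[OF continuous_on_traj_data[OF g]] f
    by measurable
  moreover have "(\<lambda>\<omega>. batches (snd \<omega>)) \<in> measurable (W \<Otimes>\<^sub>M measure_pmf p) (count_space UNIV)"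
    by (rule measurable_compose[OF measurable_snd]) simp
  ultimately show ?thesis
    unfolding eq by (rule measurable_compose_countable)
qed

lemma norm_opt_step_diff_le:
  assumes g_bound: "\<And>\<theta> z. norm (g \<theta> z) \<le> \<xi>"
  shows "norm (opt_step g b S \<gamma> \<theta> - opt_step g b S' \<gamma> \<theta>)
     \<le> 2 * \<xi> / b * (\<Sum>i<b. indicator {d. S ! d \<noteq> S' ! d} (\<gamma> i))"
proof -
  have summand: "norm (g \<theta> (S ! \<gamma> i) - g \<theta> (S' ! \<gamma> i)) \<le> 2 * \<xi> * indicator {d. S ! d \<noteq> S' ! d} (\<gamma> i)" for i
    using norm_triangle_ineq4[of "g \<theta> (S ! \<gamma> i)" "g \<theta> (S' ! \<gamma> i)"] g_bound[of \<theta> "S ! \<gamma> i"]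
      g_bound[of \<theta> "S' ! \<gamma> i"]
    by (cases "S ! \<gamma> i = S' ! \<gamma> i") auto
  have "norm (\<Sum>i<b. g \<theta> (S ! \<gamma> i) - g \<theta> (S' ! \<gamma> i))
      \<le> (\<Sum>i<b. 2 * \<xi> * indicator {d. S ! d \<noteq> S' ! d} (\<gamma> i))"
    by (intro order.trans[OF norm_sum] sum_mono summand)
  also have "\<dots> = 2 * \<xi> * (\<Sum>i<b. indicator {d. S ! d \<noteq> S' ! d} (\<gamma> i))"
    by (rule sum_distrib_left[symmetric])
  finally show ?thesis
    unfolding opt_step_def
    by (simp add: sum_subtractf scaleR_diff_right[symmetric] divide_right_mono)
qed

lemma map_pmf_batch_seqs_coordinate:
  assumes "j < t" "i < b" "1 \<le> n"
  shows "map_pmf (\<lambda>\<Gamma>. \<Gamma> j i) (pmf_of_set (batch_seqs t b n)) = pmf_of_set {..<n}"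
proof -
  have PiE_eq: "PiE A B = PiE_dflt A undefined B" for A :: "nat set" and B :: "nat \<Rightarrow> 'a set"
    unfolding PiE_dflt_def PiE_def extensional_def by auto
  have batch: "pmf_of_set (PiE {..<b} (\<lambda>_. {..<n})) = Pi_pmf {..<b} undefined (\<lambda>_. pmf_of_set {..<n})"
    unfolding PiE_eq using assms by (intro Pi_pmf_of_set[symmetric]) (auto simp: lessThan_empty_iff)
  have seqs: "pmf_of_set (batch_seqs t b n)
      = Pi_pmf {..<t} undefined (\<lambda>_. pmf_of_set (PiE {..<b} (\<lambda>_. {..<n})))"
    unfolding batch_seqs_def PiE_eq[of "{..<t}"] using assms
    by (intro Pi_pmf_of_set[symmetric]) (auto simp: PiE_eq_empty_iff lessThan_empty_iff intro!: finite_PiE)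
  have "map_pmf (\<lambda>\<Gamma>. \<Gamma> j i) (pmf_of_set (batch_seqs t b n))
      = map_pmf (\<lambda>f. f i) (map_pmf (\<lambda>\<Gamma>. \<Gamma> j) (pmf_of_set (batch_seqs t b n)))"
    by (simp add: map_pmf_comp)
  also have "\<dots> = pmf_of_set {..<n}"
    unfolding seqs using assms by (simp add: Pi_pmf_component batch lessThan_empty_iff)
  finally show ?thesis .
qed

lemma nn_integral_batch_hits:
  assumes "j < t" "1 \<le> n"
  shows "(\<integral>\<^sup>+\<Gamma>. ennreal (\<Sum>i<b. indicator D (\<Gamma> j i)) \<partial>measure_pmf (pmf_of_set (batch_seqs t b n)))
     = ennreal (b * card ({..<n} \<inter> D) / n)"
proof -
  have "(\<integral>\<^sup>+\<Gamma>. ennreal (indicator D (\<Gamma> j i)) \<partial>measure_pmf (pmf_of_set (batch_seqs t b n)))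
      = ennreal (card ({..<n} \<inter> D) / n)" if "i < b" for i
  proof -
    have "(\<integral>\<^sup>+\<Gamma>. ennreal (indicator D (\<Gamma> j i)) \<partial>measure_pmf (pmf_of_set (batch_seqs t b n)))
        = (\<integral>\<^sup>+x. ennreal (indicator D x) \<partial>measure_pmf (map_pmf (\<lambda>\<Gamma>. \<Gamma> j i) (pmf_of_set (batch_seqs t b n))))"
      by simp
    also have "\<dots> = emeasure (measure_pmf (pmf_of_set {..<n})) D"
      unfolding map_pmf_batch_seqs_coordinate[OF assms(1) that assms(2)]
      by (simp add: ennreal_indicator nn_integral_indicator)
    also have "\<dots> = ennreal (card ({..<n} \<inter> D) / n)"
      using assms by (subst emeasure_pmf_of_set)
        (auto simp: divide_ennreal ennreal_of_nat_eq_real_of_nat lessThan_empty_iff)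
    finally show ?thesis .
  qed
  then have "(\<integral>\<^sup>+\<Gamma>. ennreal (\<Sum>i<b. indicator D (\<Gamma> j i)) \<partial>measure_pmf (pmf_of_set (batch_seqs t b n)))
      = (\<Sum>i<b. ennreal (card ({..<n} \<inter> D) / n))"
    by (simp add: sum_ennreal[symmetric] nn_integral_sum del: sum_ennreal)
  also have "\<dots> = ennreal (b * card ({..<n} \<inter> D) / n)"
    by (simp add: ennreal_of_nat_eq_real_of_nat ennreal_mult'[symmetric])
  finally show ?thesis .
qed

lemma prob_space_alg_space:
  assumes "prob_space W"
  shows "prob_space (alg_space W t b n)"
proof -
  interpret W: prob_space W by fact
  interpret pair_prob_space W "measure_pmf (pmf_of_set (batch_seqs t b n))" ..
  show ?thesis unfolding alg_space_def by (rule prob_space_axioms)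
qed

lemma nn_integral_alg_space_snd:
  assumes "prob_space W"
  shows "(\<integral>\<^sup>+\<omega>. h (snd \<omega>) \<partial>alg_space W t b n) = (\<integral>\<^sup>+\<Gamma>. h \<Gamma> \<partial>measure_pmf (pmf_of_set (batch_seqs t b n)))"
proof -
  interpret prob_space W by fact
  show ?thesis
    unfolding alg_space_def
    by (subst measure_pmf.nn_integral_fst[symmetric])
      (simp_all add: emeasure_space_1 measurable_compose[OF measurable_snd])
qed

text \<open>Resampling one example changes a step by at most 2 \<xi> / b per hit of that example in the
  batch, and a uniformly drawn batch hits it b / n times on average.\<close>
lemma nn_integral_opt_step_diff_le:
  assumes g_bound: "\<And>\<theta> z. norm (g \<theta> z) \<le> \<xi>" and "1 \<le> b" "b \<le> n"
    and "prob_space W" and "j < t" and "neighbours n S S'"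
  shows "(\<integral>\<^sup>+\<omega>. ennreal (norm (opt_step g b S (snd \<omega> j) (X \<omega>) - opt_step g b S' (snd \<omega> j) (X \<omega>)))
            \<partial>alg_space W t b n) \<le> ennreal (2 * \<xi> / n)"
proof -
  define D where "D = {d. S ! d \<noteq> S' ! d}"
  have "0 \<le> \<xi>" by (rule order_trans[OF norm_ge_zero g_bound])
  have "card ({..<n} \<inter> D) \<le> 1"
    using \<open>neighbours n S S'\<close> unfolding neighbours_def D_def by (simp add: Int_def conj_commute)
  then have "real b * card ({..<n} \<inter> D) \<le> b"
    by (simp add: mult_left_le)
  then have hits: "b * card ({..<n} \<inter> D) / n \<le> b / n"
    by (simp add: divide_right_mono)
  have "(\<integral>\<^sup>+\<omega>. ennreal (norm (opt_step g b S (snd \<omega> j) (X \<omega>) - opt_step g b S' (snd \<omega> j) (X \<omega>)))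
            \<partial>alg_space W t b n)
      \<le> (\<integral>\<^sup>+\<omega>. ennreal (2 * \<xi> / b) * ennreal (\<Sum>i<b. indicator D (snd \<omega> j i)) \<partial>alg_space W t b n)"
    using norm_opt_step_diff_le[of g \<xi> b S _ _ S', OF g_bound, folded D_def] \<open>0 \<le> \<xi>\<close>
    by (intro nn_integral_mono) (auto simp: ennreal_mult'[symmetric] intro!: ennreal_leI)
  also have "\<dots> = ennreal (2 * \<xi> / b) * ennreal (b * card ({..<n} \<inter> D) / n)"
  proof -
    have "(\<lambda>\<omega>. ennreal (\<Sum>i<b. indicator D (snd \<omega> j i))) \<in> borel_measurable (alg_space W t b n)"
      unfolding alg_space_def by (rule measurable_compose[OF measurable_snd]) simp
    moreover have "1 \<le> n" using assms by simp
    ultimately show ?thesis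
      using nn_integral_alg_space_snd[OF \<open>prob_space W\<close>, where h="\<lambda>\<Gamma>. ennreal (\<Sum>i<b. indicator D (\<Gamma> j i))"]
      by (simp add: nn_integral_cmult nn_integral_batch_hits[OF \<open>j < t\<close>])
  qed
  also have "\<dots> \<le> ennreal (2 * \<xi> / b) * ennreal (b / n)"
    using hits by (intro mult_left_mono ennreal_leI) simp_all
  also have "\<dots> = ennreal (2 * \<xi> / n)"
    using \<open>0 \<le> \<xi>\<close> \<open>1 \<le> b\<close> by (simp add: ennreal_mult'[symmetric])
  finally show ?thesis .
qed

lemma contracting_in_expectation_iterate:
  assumes contr: "contracting_in_expectation P g b t S M \<mu>" and "0 \<le> \<mu>"
    and meas: "\<And>k. X k \<in> borel_measurable P" "\<And>k. Y k \<in> borel_measurable P"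
    and adapted: "\<And>k. adapted_before k (X k)" "\<And>k. adapted_before k (Y k)"
    and X_step: "\<And>k \<omega>. a \<le> k \<Longrightarrow> k < t \<Longrightarrow> X (Suc k) \<omega> = opt_step g b S (snd \<omega> k) (X k \<omega>)"
    and Y_step: "\<And>k \<omega>. a \<le> k \<Longrightarrow> k < t \<Longrightarrow> Y (Suc k) \<omega> = opt_step g b S (snd \<omega> k) (Y k \<omega>)"
    and "a \<le> k" "k \<le> t"
  shows "(\<integral>\<^sup>+\<omega>. ennreal (geodist (M k) (X k \<omega>) (Y k \<omega>)) \<partial>P)
       \<le> ennreal (\<mu> ^ (k - a)) * (\<integral>\<^sup>+\<omega>. ennreal (geodist (M a) (X a \<omega>) (Y a \<omega>)) \<partial>P)"
  using \<open>a \<le> k\<close> \<open>k \<le> t\<close>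
proof (induction k rule: dec_induct)
  case (step k)
  have "(\<integral>\<^sup>+\<omega>. ennreal (geodist (M (Suc k)) (X (Suc k) \<omega>) (Y (Suc k) \<omega>)) \<partial>P)
      = (\<integral>\<^sup>+\<omega>. ennreal (geodist (M (Suc k)) (opt_step g b S (snd \<omega> k) (X k \<omega>))
                                          (opt_step g b S (snd \<omega> k) (Y k \<omega>))) \<partial>P)"
    using step by (simp add: X_step Y_step)
  also have "\<dots> \<le> ennreal \<mu> * (\<integral>\<^sup>+\<omega>. ennreal (geodist (M k) (X k \<omega>) (Y k \<omega>)) \<partial>P)"
    using contr step meas adapted unfolding contracting_in_expectation_def by simp
  also have "\<dots> \<le> ennreal \<mu> * (ennreal (\<mu> ^ (k - a)) * (\<integral>\<^sup>+\<omega>. ennreal (geodist (M a) (X a \<omega>) (Y a \<omega>)) \<partial>P))"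
    using step by (intro mult_left_mono) simp_all
  also have "\<dots> = ennreal (\<mu> ^ (Suc k - a)) * (\<integral>\<^sup>+\<omega>. ennreal (geodist (M a) (X a \<omega>) (Y a \<omega>)) \<partial>P)"
    using step \<open>0 \<le> \<mu>\<close> by (simp add: Suc_diff_le mult.assoc ennreal_mult')
  finally show ?case .
qed simp

lemma contracting_in_expectation_norm_le:
  assumes contr: "contracting_in_expectation P g b t S M \<mu>" and "0 \<le> \<mu>"
    and metrics: "\<And>k. k \<le> t \<Longrightarrow> metric_field (M k) Mmin Mmax" and "0 < Mmin"
    and meas: "\<And>k. X k \<in> borel_measurable P" "\<And>k. Y k \<in> borel_measurable P"
    and adapted: "\<And>k. adapted_before k (X k)" "\<And>k. adapted_before k (Y k)"
    and X_step: "\<And>k \<omega>. a \<le> k \<Longrightarrow> k < t \<Longrightarrow> X (Suc k) \<omega> = opt_step g b S (snd \<omega> k) (X k \<omega>)"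
    and Y_step: "\<And>k \<omega>. a \<le> k \<Longrightarrow> k < t \<Longrightarrow> Y (Suc k) \<omega> = opt_step g b S (snd \<omega> k) (Y k \<omega>)"
    and "a \<le> t"
    and start: "(\<integral>\<^sup>+\<omega>. ennreal (norm (X a \<omega> - Y a \<omega>)) \<partial>P) \<le> ennreal c"
  shows "(\<integral>\<^sup>+\<omega>. ennreal (norm (X t \<omega> - Y t \<omega>)) \<partial>P) \<le> ennreal (\<mu> ^ (t - a) * sqrt (Mmax / Mmin) * c)"
proof -
  have "Mmin \<le> Mmax" using metric_field_le metrics by blast
  then have "0 \<le> sqrt Mmax" using \<open>0 < Mmin\<close> by simp
  have "ennreal (sqrt Mmin) * (\<integral>\<^sup>+\<omega>. ennreal (norm (X t \<omega> - Y t \<omega>)) \<partial>P)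
      = (\<integral>\<^sup>+\<omega>. ennreal (sqrt Mmin * norm (Y t \<omega> - X t \<omega>)) \<partial>P)"
    using meas \<open>0 < Mmin\<close> by (simp add: nn_integral_cmult[symmetric] ennreal_mult' norm_minus_commute)
  also have "\<dots> \<le> (\<integral>\<^sup>+\<omega>. ennreal (geodist (M t) (X t \<omega>) (Y t \<omega>)) \<partial>P)"
    using geodist_bounds(1)[OF metrics \<open>0 < Mmin\<close>] by (intro nn_integral_mono ennreal_leI) simp
  also have "\<dots> \<le> ennreal (\<mu> ^ (t - a)) * (\<integral>\<^sup>+\<omega>. ennreal (geodist (M a) (X a \<omega>) (Y a \<omega>)) \<partial>P)"
    by (rule contracting_in_expectation_iterate[OF contr \<open>0 \<le> \<mu>\<close> meas adapted X_step Y_step \<open>a \<le> t\<close>]) simp_all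
  also have "\<dots> \<le> ennreal (\<mu> ^ (t - a)) * (\<integral>\<^sup>+\<omega>. ennreal (sqrt Mmax * norm (X a \<omega> - Y a \<omega>)) \<partial>P)"
    using geodist_bounds(2)[OF metrics[OF \<open>a \<le> t\<close>] \<open>0 < Mmin\<close>]
    by (intro mult_left_mono nn_integral_mono ennreal_leI) (simp_all add: norm_minus_commute)
  also have "\<dots> = ennreal (\<mu> ^ (t - a) * sqrt Mmax) * (\<integral>\<^sup>+\<omega>. ennreal (norm (X a \<omega> - Y a \<omega>)) \<partial>P)"
    using meas \<open>0 \<le> sqrt Mmax\<close> \<open>0 \<le> \<mu>\<close>
    by (simp add: nn_integral_cmult[symmetric] ennreal_mult' mult.assoc)
  also have "\<dots> \<le> ennreal (\<mu> ^ (t - a) * sqrt Mmax) * ennreal c"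
    using start by (rule mult_left_mono) simp
  also have "\<dots> = ennreal (\<mu> ^ (t - a) * sqrt Mmax * c)"
    using \<open>0 \<le> sqrt Mmax\<close> \<open>0 \<le> \<mu>\<close> by (simp add: ennreal_mult')
  also have "\<dots> = ennreal (sqrt Mmin * (\<mu> ^ (t - a) * sqrt (Mmax / Mmin) * c))"
    using \<open>0 < Mmin\<close> by (simp add: real_sqrt_divide)
  also have "\<dots> = ennreal (sqrt Mmin) * ennreal (\<mu> ^ (t - a) * sqrt (Mmax / Mmin) * c)"
    using \<open>0 < Mmin\<close> by (intro ennreal_mult') simp
  finally show ?thesis
    using \<open>0 < Mmin\<close> by (simp add: ennreal_mult_le_mult_iff)
qed

lemma nn_integral_norm_telescope:
  fixes v :: "nat \<Rightarrow> 'a \<Rightarrow> 'b::{second_countable_topology, real_normed_vector}"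
  assumes "\<And>a. v a \<in> borel_measurable P"
  shows "(\<integral>\<^sup>+\<omega>. ennreal (norm (v 0 \<omega> - v N \<omega>)) \<partial>P)
       \<le> (\<Sum>a<N. \<integral>\<^sup>+\<omega>. ennreal (norm (v a \<omega> - v (Suc a) \<omega>)) \<partial>P)"
proof (induction N)
  case (Suc N)
  have "(\<integral>\<^sup>+\<omega>. ennreal (norm (v 0 \<omega> - v (Suc N) \<omega>)) \<partial>P)
      \<le> (\<integral>\<^sup>+\<omega>. ennreal (norm (v 0 \<omega> - v N \<omega>)) + ennreal (norm (v N \<omega> - v (Suc N) \<omega>)) \<partial>P)"
  proof (intro nn_integral_mono)
    fix \<omega>
    have "norm (v 0 \<omega> - v (Suc N) \<omega>) \<le> norm (v 0 \<omega> - v N \<omega>) + norm (v N \<omega> - v (Suc N) \<omega>)"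
      using norm_triangle_ineq[of "v 0 \<omega> - v N \<omega>" "v N \<omega> - v (Suc N) \<omega>"] by simp
    then show "ennreal (norm (v 0 \<omega> - v (Suc N) \<omega>))
        \<le> ennreal (norm (v 0 \<omega> - v N \<omega>)) + ennreal (norm (v N \<omega> - v (Suc N) \<omega>))"
      by (simp add: ennreal_plus[symmetric] del: ennreal_plus)
  qed
  also have "\<dots> = (\<integral>\<^sup>+\<omega>. ennreal (norm (v 0 \<omega> - v N \<omega>)) \<partial>P)
                 + (\<integral>\<^sup>+\<omega>. ennreal (norm (v N \<omega> - v (Suc N) \<omega>)) \<partial>P)"
    using assms by (intro nn_integral_add) simp_all
  finally show ?case
    using Suc.IH by (simp add: add_right_mono order_trans)
qed simp

lemma uniformly_stable_if_lipschitz: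
  fixes A :: "'z list \<Rightarrow> 'o \<Rightarrow> 'p::euclidean_space"
  assumes lip: "\<And>z. L-lipschitz_on UNIV (\<lambda>\<theta>. loss \<theta> z)"
    and meas: "\<And>S. A S \<in> borel_measurable P"
    and dist: "\<And>S S'. neighbours n S S' \<Longrightarrow> (\<integral>\<^sup>+\<omega>. ennreal (norm (A S \<omega> - A S' \<omega>)) \<partial>P) \<le> ennreal B"
    and "0 \<le> B"
  shows "uniformly_stable P n A loss (L * B)"
  unfolding uniformly_stable_def
proof (intro allI impI)
  fix S S' :: "'z list" and z
  assume "neighbours n S S'"
  have "0 \<le> L" using lip by (rule lipschitz_on_nonneg)
  have "loss (A S \<omega>) z - loss (A S' \<omega>) z \<le> L * norm (A S \<omega> - A S' \<omega>)" for \<omega>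
    using lipschitz_onD[OF lip[of z], of "A S \<omega>" "A S' \<omega>"] by (simp add: dist_norm dist_real_def abs_le_iff)
  then have "(\<integral>\<^sup>+\<omega>. ennreal (loss (A S \<omega>) z - loss (A S' \<omega>) z) \<partial>P)
      \<le> (\<integral>\<^sup>+\<omega>. ennreal L * ennreal (norm (A S \<omega> - A S' \<omega>)) \<partial>P)"
    using \<open>0 \<le> L\<close> by (intro nn_integral_mono) (simp add: ennreal_mult'[symmetric] ennreal_leI)
  also have "\<dots> \<le> ennreal L * ennreal B"
    using meas dist[OF \<open>neighbours n S S'\<close>] by (simp add: nn_integral_cmult mult_left_mono)
  finally show "(\<integral>\<omega>. loss (A S \<omega>) z - loss (A S' \<omega>) z \<partial>P) \<le> L * B"
    using \<open>0 \<le> L\<close> \<open>0 \<le> B\<close> by (intro integral_real_bounded) (simp_all add: ennreal_mult')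
qed

lemma measurable_alg:
  assumes "\<And>z. continuous_on UNIV (\<lambda>\<theta>. g \<theta> z)" and "init S \<in> borel_measurable W"
  shows "alg g b t init S \<in> borel_measurable (alg_space W t b n)"
proof -
  have "alg g b t init S = (\<lambda>\<omega>. traj_data g b (\<lambda>_. S) (init S (fst \<omega>)) (snd \<omega>) t)"
    by (simp add: fun_eq_iff alg_def traj_data_eq_traj)
  then show ?thesis
    unfolding alg_space_def using measurable_traj_data[OF assms] by simp
qed

locale hybrid_argument =
  fixes g :: "real^'m \<Rightarrow> 'z \<Rightarrow> real^'m" and \<xi> :: real and b n t :: nat
    and W :: "'w measure" and init :: "'z list \<Rightarrow> 'w \<Rightarrow> real^'m" and \<theta>ref :: "real^'m" and C :: real
    and S S' :: "'z list"
  assumes g_cont: "\<And>z. continuous_on UNIV (\<lambda>\<theta>. g \<theta> z)"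
    and g_bound: "\<And>\<theta> z. norm (g \<theta> z) \<le> \<xi>"
    and b_pos: "1 \<le> b" and b_le: "b \<le> n"
    and W_prob: "prob_space W"
    and init_meas: "\<And>S. init S \<in> borel_measurable W"
    and init_ball: "\<And>S w. init S w \<in> cball \<theta>ref (C / 2)"
    and neighbours: "neighbours n S S'"
begin

text \<open>hybrid 0 is the run on S and hybrid (Suc t) the run on S'; hybrid (Suc j) starts like the
  run on S' and switches from S' to S after j steps.\<close>
definition hybrid :: "nat \<Rightarrow> nat \<Rightarrow> 'w \<times> (nat \<Rightarrow> nat \<Rightarrow> nat) \<Rightarrow> real^'m" where
  "hybrid a k = (\<lambda>\<omega>. traj_data g b (\<lambda>j. if Suc j < a then S' else S)
                        (init (if a = 0 then S else S') (fst \<omega>)) (snd \<omega>) k)"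

lemma hybrid_first: "hybrid 0 t = alg g b t init S"
  by (simp add: fun_eq_iff hybrid_def alg_def traj_data_eq_traj)

lemma hybrid_last: "hybrid (Suc t) t = alg g b t init S'"
  by (simp add: fun_eq_iff hybrid_def alg_def traj_data_eq_traj)

lemma hybrid_Suc: "a \<le> Suc k \<Longrightarrow> hybrid a (Suc k) \<omega> = opt_step g b S (snd \<omega> k) (hybrid a k \<omega>)"
  by (simp add: hybrid_def)

lemma measurable_hybrid: "hybrid a k \<in> borel_measurable (alg_space W t b n)"
  unfolding hybrid_def alg_space_def by (rule measurable_traj_data[OF g_cont init_meas])

lemma adapted_before_hybrid: "adapted_before k (hybrid a k)"
  unfolding hybrid_def by (rule adapted_before_traj_data)

lemma nn_integral_hybrid_first_diff_le:
  "(\<integral>\<^sup>+\<omega>. ennreal (norm (hybrid 0 0 \<omega> - hybrid 1 0 \<omega>)) \<partial>alg_space W t b n) \<le> ennreal C"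
proof -
  interpret prob_space "alg_space W t b n" using W_prob by (rule prob_space_alg_space)
  have "norm (init S w - init S' w) \<le> C" for w
  proof -
    have "norm (init S w - init S' w) \<le> dist (init S w) \<theta>ref + dist \<theta>ref (init S' w)"
      by (metis dist_norm dist_triangle)
    also have "\<dots> \<le> C"
      using init_ball[of S w] init_ball[of S' w] by (simp add: dist_commute)
    finally show ?thesis .
  qed
  then have "(\<integral>\<^sup>+\<omega>. ennreal (norm (hybrid 0 0 \<omega> - hybrid 1 0 \<omega>)) \<partial>alg_space W t b n)
      \<le> (\<integral>\<^sup>+\<omega>. ennreal C \<partial>alg_space W t b n)"
    by (intro nn_integral_mono) (simp add: hybrid_def ennreal_leI)
  then show ?thesis by (simp add: emeasure_space_1)
qed

lemma nn_integral_hybrid_switch_diff_le: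
  assumes "j < t"
  shows "(\<integral>\<^sup>+\<omega>. ennreal (norm (hybrid (Suc j) (Suc j) \<omega> - hybrid (Suc (Suc j)) (Suc j) \<omega>))
           \<partial>alg_space W t b n) \<le> ennreal (2 * \<xi> / n)"
proof -
  have "hybrid (Suc (Suc j)) j = hybrid (Suc j) j"
    by (simp add: fun_eq_iff hybrid_def traj_data_eq_traj)
  then have "hybrid (Suc (Suc j)) (Suc j) \<omega> = opt_step g b S' (snd \<omega> j) (hybrid (Suc j) j \<omega>)" for \<omega>
    by (simp add: hybrid_def fun_eq_iff)
  then show ?thesis
    using nn_integral_opt_step_diff_le[OF g_bound b_pos b_le W_prob assms neighbours]
    by (simp add: hybrid_Suc)
qed

context
  fixes \<mu> Mmin Mmax :: real and M :: "nat \<Rightarrow> real^'m \<Rightarrow> real^'m^'m"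
  assumes mu: "0 < \<mu>" "\<mu> < 1"
    and Mmin_pos: "0 < Mmin"
    and metrics: "\<And>k. k \<le> t \<Longrightarrow> metric_field (M k) Mmin Mmax"
    and contr: "contracting_in_expectation (alg_space W t b n) g b t S M \<mu>"
begin

lemma nn_integral_hybrid_diff_le:
  assumes "a \<le> t"
  shows "(\<integral>\<^sup>+\<omega>. ennreal (norm (hybrid a t \<omega> - hybrid (Suc a) t \<omega>)) \<partial>alg_space W t b n)
       \<le> ennreal (\<mu> ^ (t - a) * sqrt (Mmax / Mmin) * (if a = 0 then C else 2 * \<xi> / n))"
proof (rule contracting_in_expectation_norm_le[OF contr _ metrics Mmin_pos measurable_hybrid
      measurable_hybrid adapted_before_hybrid adapted_before_hybrid _ _ assms])
  show "(\<integral>\<^sup>+\<omega>. ennreal (norm (hybrid a a \<omega> - hybrid (Suc a) a \<omega>)) \<partial>alg_space W t b n)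
      \<le> ennreal (if a = 0 then C else 2 * \<xi> / n)"
    using assms nn_integral_hybrid_first_diff_le nn_integral_hybrid_switch_diff_le
    by (cases a) simp_all
qed (use mu in \<open>simp_all add: hybrid_Suc\<close>)

lemma nn_integral_alg_diff_le:
  "(\<integral>\<^sup>+\<omega>. ennreal (norm (alg g b t init S \<omega> - alg g b t init S' \<omega>)) \<partial>alg_space W t b n)
     \<le> ennreal (sqrt (Mmax / Mmin) * C * \<mu> ^ t + 2 * sqrt (Mmax / Mmin) * \<xi> / ((1 - \<mu>) * n))"
proof -
  define chi where "chi = sqrt (Mmax / Mmin)"
  define r where "r a = \<mu> ^ (t - a) * chi * (if a = 0 then C else 2 * \<xi> / n)" for a
  have "0 \<le> \<xi>" by (rule order_trans[OF norm_ge_zero g_bound])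
  have "0 \<le> C"
    using zero_le_dist[of \<theta>ref "init S undefined"] init_ball[of S undefined] unfolding mem_cball by linarith
  have "0 \<le> chi" using metric_field_le[OF metrics[of 0]] Mmin_pos by (simp add: chi_def)
  have r_nonneg: "0 \<le> r a" for a using mu \<open>0 \<le> \<xi>\<close> \<open>0 \<le> C\<close> \<open>0 \<le> chi\<close> by (simp add: r_def)
  have "(\<Sum>j<t. r (Suc j)) = chi * (2 * \<xi> / n) * (\<Sum>j<t. \<mu> ^ (t - Suc j))"
    by (simp add: r_def sum_distrib_left sum_divide_distrib mult_ac)
  also have "\<dots> \<le> chi * (2 * \<xi> / n) * (1 / (1 - \<mu>))"
    using geometric_sum_less[OF mu, of "{..<t}"] \<open>0 \<le> \<xi>\<close> \<open>0 \<le> chi\<close>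
    by (intro mult_left_mono) (simp_all add: sum.nat_diff_reindex)
  also have "\<dots> = 2 * chi * \<xi> / ((1 - \<mu>) * n)"
    by (simp add: mult_ac)
  finally have "(\<Sum>j<t. r (Suc j)) \<le> 2 * chi * \<xi> / ((1 - \<mu>) * n)" .
  moreover have "r 0 = chi * C * \<mu> ^ t"
    by (simp add: r_def)
  ultimately have sum_r: "(\<Sum>a<Suc t. r a) \<le> chi * C * \<mu> ^ t + 2 * chi * \<xi> / ((1 - \<mu>) * n)"
    unfolding sum.lessThan_Suc_shift by linarith
  have "(\<integral>\<^sup>+\<omega>. ennreal (norm (hybrid 0 t \<omega> - hybrid (Suc t) t \<omega>)) \<partial>alg_space W t b n)
      \<le> (\<Sum>a<Suc t. \<integral>\<^sup>+\<omega>. ennreal (norm (hybrid a t \<omega> - hybrid (Suc a) t \<omega>)) \<partial>alg_space W t b n)"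
    by (rule nn_integral_norm_telescope[where v="\<lambda>a. hybrid a t"]) (rule measurable_hybrid)
  also have "\<dots> \<le> (\<Sum>a<Suc t. ennreal (r a))"
    unfolding r_def chi_def by (intro sum_mono nn_integral_hybrid_diff_le) simp
  also have "\<dots> \<le> ennreal (chi * C * \<mu> ^ t + 2 * chi * \<xi> / ((1 - \<mu>) * n))"
    using sum_r r_nonneg by (simp add: sum_ennreal ennreal_leI del: sum.lessThan_Suc)
  finally show ?thesis
    by (simp add: hybrid_first hybrid_last chi_def)
qed

end

end

theorem theorem4:
  fixes loss :: "real^'m \<Rightarrow> 'z \<Rightarrow> real"
    and g :: "real^'m \<Rightarrow> 'z \<Rightarrow> real^'m"
    and W :: "'w measure"
    and init :: "'z list \<Rightarrow> 'w \<Rightarrow> real^'m"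
    and M :: "'z list \<Rightarrow> nat \<Rightarrow> real^'m \<Rightarrow> real^'m^'m"
    and \<theta>ref :: "real^'m"
    and L \<xi> C \<mu> Mmin Mmax :: real
    and n b t :: nat
  assumes lip: "\<And>z. L-lipschitz_on UNIV (\<lambda>\<theta>. loss \<theta> z)"
    and g_smooth: "\<And>z. smooth_map (\<lambda>\<theta>. g \<theta> z)"
    and g_bound: "\<And>\<theta> z. norm (g \<theta> z) \<le> \<xi>"
    and b_pos: "1 \<le> b" and b_le: "b \<le> n"
    and W_prob: "prob_space W"
    and init_meas: "\<And>S. init S \<in> borel_measurable W"
    and init_ball: "\<And>S w. init S w \<in> cball \<theta>ref (C / 2)"
    and mu: "0 < \<mu>" "\<mu> < 1"
    and Mmin_pos: "0 < Mmin"
    and metrics: "\<And>S k. length S = n \<Longrightarrow> k \<le> t \<Longrightarrow> metric_field (M S k) Mmin Mmax"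
    and contr: "\<And>S. length S = n \<Longrightarrow>
                  contracting_in_expectation (alg_space W t b n) g b t S (M S) \<mu>"
  shows "uniformly_stable (alg_space W t b n) n (alg g b t init) loss
           (L * sqrt (Mmax / Mmin) * C * \<mu> ^ t
            + 2 * sqrt (Mmax / Mmin) * L * \<xi> / ((1 - \<mu>) * real n))"
proof -
  have g_cont: "\<And>z. continuous_on UNIV (\<lambda>\<theta>. g \<theta> z)"
    using g_smooth by (rule smooth_map_continuous)
  let ?B = "sqrt (Mmax / Mmin) * C * \<mu> ^ t + 2 * sqrt (Mmax / Mmin) * \<xi> / ((1 - \<mu>) * n)"
  have "0 \<le> ?B"
  proof -
    have "0 \<le> \<xi>" by (rule order_trans[OF norm_ge_zero g_bound])
    moreover have "0 \<le> C"
      using zero_le_dist[of \<theta>ref "init undefined undefined"] init_ball[of undefined undefined]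
      unfolding mem_cball by linarith
    moreover have "Mmin \<le> Mmax" using metric_field_le metrics[of "replicate n undefined" 0] by simp
    ultimately show ?thesis using mu Mmin_pos by simp
  qed
  have "uniformly_stable (alg_space W t b n) n (alg g b t init) loss (L * ?B)"
  proof (rule uniformly_stable_if_lipschitz[OF lip measurable_alg[OF g_cont init_meas] _ \<open>0 \<le> ?B\<close>])
    fix S S' :: "'z list"
    assume "neighbours n S S'"
    then interpret hybrid_argument g \<xi> b n t W init \<theta>ref C S S'
      by (rule hybrid_argument.intro[OF g_cont g_bound b_pos b_le W_prob init_meas init_ball])
    from \<open>neighbours n S S'\<close> have "length S = n" by (simp add: neighbours_def)
    then show "(\<integral>\<^sup>+\<omega>. ennreal (norm (alg g b t init S \<omega> - alg g b t init S' \<omega>)) \<partial>alg_space W t b n) \<le> ennreal ?B"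
      using nn_integral_alg_diff_le[OF mu Mmin_pos metrics contr] by simp
  qed
  then show ?thesis by (simp add: algebra_simps)
qed

end
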